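(* Let $a\ge 2$ be even and let $c$ be odd. If $0<c<\frac a2$, then $U=\{(a,-a),(c,-c)\}$ is avoidable. If $c=\frac a2$, then $U=\{(a,-a),(\frac a2,-\frac a2),(0,0)\}$ is avoidable.
   Context: The bicyclic inverse semigroup is $\mathcal{B}=\{(a,b)\in\mathbb{Z}\times\mathbb{Z}\mid a\ge 0,\ a+b\ge 0\}$ with multiplication $(a,b)(c,d)=(\max\{c+d,a\}-d,\ b+d)$. A subset $U\subseteq\mathcal{B}$ is called avoidable if $\mathcal{B}$ can be partitioned into two subsets $A$ and $B$ such that no element of $U$ can be written as a product $xy$ of two distinct elements $x\neq y$ both in $A$, or both in $B$. *)

theory Defs
  imports Main
begin

definition bicyclic :: "(int \<times> int) set" where
  "bicyclic = {(a, b). a \<ge> 0 \<and> a + b \<ge> 0}"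

fun bmult :: "int \<times> int \<Rightarrow> int \<times> int \<Rightarrow> int \<times> int" where
  "bmult (a, b) (c, d) = (max (c + d) a - d, b + d)"

definition avoidable :: "(int \<times> int) set \<Rightarrow> bool" where
  "avoidable U \<longleftrightarrow> U \<subseteq> bicyclic \<and>
     (\<exists>A B. A \<union> B = bicyclic \<and> A \<inter> B = {} \<and>
        (\<forall>x\<in>A. \<forall>y\<in>A. x \<noteq> y \<longrightarrow> bmult x y \<notin> U) \<and>
        (\<forall>x\<in>B. \<forall>y\<in>B. x \<noteq> y \<longrightarrow> bmult x y \<notin> U))"

end

theory Submission
  imports Defs
begin

text \<open>A product x y lands on the antidiagonal point (t, -t) only if x = (p, -p) is itself on the
  antidiagonal, and then y = (t - p, p - t) or y lies strictly above the antidiagonal and has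
  second coordinate p - t. Colour antidiagonal points (p, -p) by a predicate P p and all other
  points (p, q) by the negation of P (q + s). The first kind of product is then controlled by a
  reflection property of P (P m differs from P (t - m)), the second by a translation property
  (P (p + s - t) agrees with P p). For the two target sets, P is the parity of a suitably shifted
  residue modulo an odd number (a - c, respectively c); reflection then holds because a nonzero
  residue r and its negative d - r have opposite parity modulo odd d.\<close>

lemma bmult_eq_antidiagonalD:
  assumes "(p1, q1) \<in> bicyclic" "(p2, q2) \<in> bicyclic" "bmult (p1, q1) (p2, q2) = (t, -t)"
  shows "q1 = -p1 \<and> p2 + q2 \<le> p1 \<and> t = p1 - q2"
  using assms by (auto simp: bicyclic_def max_def split: if_splits)

lemma avoidable_by_colouring:
  fixes col :: "int \<times> int \<Rightarrow> bool"
  assumes "U \<subseteq> bicyclic"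
    and "\<And>x y. x \<in> bicyclic \<Longrightarrow> y \<in> bicyclic \<Longrightarrow> x \<noteq> y \<Longrightarrow> bmult x y \<in> U \<Longrightarrow> col x \<noteq> col y"
  shows "avoidable U"
  unfolding avoidable_def
proof (intro conjI exI)
  show "{x \<in> bicyclic. col x} \<union> {x \<in> bicyclic. \<not> col x} = bicyclic"
    and "{x \<in> bicyclic. col x} \<inter> {x \<in> bicyclic. \<not> col x} = {}" by blast+
qed (use assms in blast)+

lemma avoidable_antidiagonal:
  fixes P :: "int \<Rightarrow> bool" and s :: int and T :: "int set"
  assumes nonneg: "\<And>t. t \<in> T \<Longrightarrow> 0 \<le> t"
    and reflect: "\<And>t m. t \<in> T \<Longrightarrow> 0 \<le> m \<Longrightarrow> 0 \<le> t - m \<Longrightarrow> 2 * m \<noteq> t \<Longrightarrow> P m \<noteq> P (t - m)"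
    and shift: "\<And>t p. t \<in> T \<Longrightarrow> 0 < p \<Longrightarrow> P (p + s - t) = P p"
  shows "avoidable ((\<lambda>t. (t, -t)) ` T)"
proof (rule avoidable_by_colouring[where col = "\<lambda>(p, q). if p + q = 0 then P p else \<not> P (q + s)"])
  show "(\<lambda>t. (t, -t)) ` T \<subseteq> bicyclic"
    using nonneg by (auto simp: bicyclic_def)
next
  fix x y assume x: "x \<in> bicyclic" and y: "y \<in> bicyclic" and "x \<noteq> y"
    and "bmult x y \<in> (\<lambda>t. (t, -t)) ` T"
  then obtain t where "t \<in> T" and "bmult x y = (t, -t)" by blast
  moreover obtain p1 q1 p2 q2 where xy: "x = (p1, q1)" "y = (p2, q2)"
    by (cases x, cases y)
  ultimately have t: "t \<in> T" "bmult (p1, q1) (p2, q2) = (t, -t)" by simp_all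
  have q1: "q1 = -p1" and "p2 + q2 \<le> p1" and q2: "q2 = p1 - t"
    using bmult_eq_antidiagonalD[OF x[unfolded xy(1)] y[unfolded xy(2)] t(2)] by auto
  have "0 \<le> p1" "0 \<le> p2" "0 \<le> p2 + q2"
    using x y xy by (auto simp: bicyclic_def)
  show "(case x of (p, q) \<Rightarrow> if p + q = 0 then P p else \<not> P (q + s))
      \<noteq> (case y of (p, q) \<Rightarrow> if p + q = 0 then P p else \<not> P (q + s))"
  proof (cases "p2 + q2 = 0")
    case True
    then have "p2 = t - p1" and "2 * p1 \<noteq> t"
      using q2 q1 \<open>x \<noteq> y\<close> xy by auto
    then have "P p1 \<noteq> P p2"
      using reflect[OF t(1) \<open>0 \<le> p1\<close>] \<open>0 \<le> p2\<close> by simp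
    then show ?thesis
      using True q1 xy by simp
  next
    case False
    then have "0 < p1"
      using \<open>0 \<le> p2 + q2\<close> \<open>p2 + q2 \<le> p1\<close> by linarith
    moreover have "q2 + s = p1 + s - t"
      using q2 by simp
    ultimately have "P (q2 + s) = P p1"
      using shift[OF t(1)] by metis
    then show ?thesis
      using False q1 xy by simp
  qed
qed

lemma odd_mod_parity_reflect:
  fixes d u v :: int
  assumes "odd d" "0 < d" "(u + v) mod d = 0" "\<not> d dvd u"
  shows "even (u mod d) \<noteq> even (v mod d)"
proof -
  have "v mod d = (- u) mod d"
    using assms(3) by (metis add_diff_cancel_left' diff_0 mod_diff_left_eq)
  also have "\<dots> = d - u mod d"
    using assms(4) by (simp add: zmod_zminus1_eq_if dvd_eq_mod_eq_0)
  finally have "u mod d + v mod d = d" by simp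
  then show ?thesis using assms(1) by (metis even_add)
qed

lemma zdvd_gt_neg_imp_nonneg:
  fixes d x :: int
  assumes "d dvd x" "- d < x"
  shows "0 \<le> x"
proof -
  have "d dvd x + d" "0 < x + d"
    using assms by simp_all
  then have "d \<le> x + d"
    by (rule zdvd_imp_le)
  then show ?thesis by simp
qed

lemma avoidable_antidiagonal_pair:
  fixes a c :: int
  assumes "even a" "odd c" "0 < c" "2 * c < a"
  shows "avoidable {(a, -a), (c, -c)}"
proof -
  define d where "d = a - c"
  define h where "h = a div 2"
  have a: "a = 2 * h"
    using assms(1) h_def by simp
  have "odd d" "0 < d" "h < d"
    using assms a d_def by auto
  define P where "P j \<longleftrightarrow> even ((j - h) mod d)" for j
  have "avoidable ((\<lambda>t. (t, -t)) ` {a, c})"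
  proof (rule avoidable_antidiagonal[where P = P and s = a])
    show "0 \<le> t" if "t \<in> {a, c}" for t
      using that assms by auto
  next
    show "P (p + a - t) = P p" if "t \<in> {a, c}" for t p
    proof -
      have "p + a - t = p \<or> p + a - t = p + d"
        using that d_def by auto
      moreover have "P (p + d) = P p"
        unfolding P_def using mod_add_self2[of "p - h" d] by (simp add: algebra_simps)
      ultimately show ?thesis by metis
    qed
  next
    show "P m \<noteq> P (t - m)" if t: "t \<in> {a, c}" and "0 \<le> m" "0 \<le> t - m" "2 * m \<noteq> t" for t m
    proof -
      have "t - a = 0 \<or> t - a = - d"
        using t d_def by auto
      then have "d dvd t - a"
        by auto
      moreover have sum: "(m - h) + (t - m - h) = t - a"
        using a by simp
      ultimately have sum_mod: "((m - h) + (t - m - h)) mod d = 0"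
        by simp
      have "\<not> d dvd m - h"
      proof
        assume "d dvd m - h"
        moreover from this have "d dvd t - m - h"
          using \<open>d dvd t - a\<close> sum by (metis add_diff_cancel_left' dvd_diff)
        moreover have "- d < m - h" "- d < t - m - h"
          using \<open>h < d\<close> \<open>0 \<le> m\<close> \<open>0 \<le> t - m\<close> by linarith+
        ultimately have "0 \<le> m - h" "0 \<le> t - m - h"
          by (blast intro: zdvd_gt_neg_imp_nonneg)+
        then show False
          using t a \<open>2 * m \<noteq> t\<close> d_def \<open>0 < d\<close> by auto
      qed
      then show ?thesis
        using odd_mod_parity_reflect[OF \<open>odd d\<close> \<open>0 < d\<close> sum_mod] unfolding P_def by simp
    qed
  qed
  then show ?thesis by simp
qed

lemma avoidable_antidiagonal_triple:
  fixes c :: int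
  assumes "odd c" "0 < c"
  shows "avoidable {(2 * c, - (2 * c)), (c, -c), (0, 0)}"
proof -
  define P where "P j \<longleftrightarrow> 0 < j \<and> even (j mod c)" for j
  have "avoidable ((\<lambda>t. (t, -t)) ` {2 * c, c, 0})"
  proof (rule avoidable_antidiagonal[where P = P and s = "2 * c"])
    show "0 \<le> t" if "t \<in> {2 * c, c, 0}" for t
      using that assms by auto
  next
    show "P (p + 2 * c - t) = P p" if "t \<in> {2 * c, c, 0}" "0 < p" for t p
      using that assms unfolding P_def by auto
  next
    show "P m \<noteq> P (t - m)"
      if t: "t \<in> {2 * c, c, 0}" and "0 \<le> m" "0 \<le> t - m" "2 * m \<noteq> t" for t m
    proof (cases "m = 0 \<or> t - m = 0")
      case True
      then show ?thesis
        using t \<open>2 * m \<noteq> t\<close> assms unfolding P_def by auto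
    next
      case False
      then have "0 < m" "0 < t - m"
        using \<open>0 \<le> m\<close> \<open>0 \<le> t - m\<close> by auto
      have "c dvd t"
        using t by auto
      have "\<not> c dvd m"
      proof
        assume "c dvd m"
        then have "c \<le> m" "c \<le> t - m"
          using \<open>c dvd t\<close> \<open>0 < m\<close> \<open>0 < t - m\<close> by (auto intro: zdvd_imp_le)
        then show False
          using t \<open>2 * m \<noteq> t\<close> \<open>0 < c\<close> by auto
      qed
      moreover have "(m + (t - m)) mod c = 0"
        using \<open>c dvd t\<close> by simp
      ultimately show ?thesis
        using odd_mod_parity_reflect[OF assms] \<open>0 < m\<close> \<open>0 < t - m\<close> unfolding P_def by auto
    qed
  qed
  then show ?thesis by simp
qed

theorem proposition3p6:
  fixes a c :: int
  assumes "a \<ge> 2" and "even a" and "odd c"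
  shows "(0 < c \<and> 2 * c < a \<longrightarrow> avoidable {(a, -a), (c, -c)}) \<and>
         (2 * c = a \<longrightarrow> avoidable {(a, -a), (a div 2, -(a div 2)), (0, 0)})"
proof (intro conjI impI)
  show "avoidable {(a, -a), (c, -c)}" if "0 < c \<and> 2 * c < a"
    using avoidable_antidiagonal_pair assms(2,3) that by blast
  show "avoidable {(a, -a), (a div 2, -(a div 2)), (0, 0)}" if "2 * c = a"
  proof -
    have "0 < c" "a div 2 = c"
      using assms(1) that by simp_all
    then show ?thesis
      using avoidable_antidiagonal_triple[OF assms(3)] that by simp
  qed
qed

end
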